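(* Let $g,d:\mathbb{N}\to\mathbb{N}$ be two functions such that $g\in n+o(n)$ and $d\in o(n)$. Define $f:\mathbb{N}\to\mathbb{N}$ by $f(n)=\max_{n=n_1+\dots+n_{d(n)}}\sum_{i=1}^{d(n)}g(n_i)$, where the maximum ranges over all ways of writing $n$ as a sum of $d(n)$ natural numbers $n_1,\dots,n_{d(n)}$. Then $f\in n+o(n)$. *)

theory Defs
  imports Complex_Main "HOL-Library.Landau_Symbols"
begin

definition decomps :: "nat \<Rightarrow> nat \<Rightarrow> nat list set" where
  "decomps k n = {xs. length xs = k \<and> sum_list xs = n}"

definition max_split :: "(nat \<Rightarrow> nat) \<Rightarrow> (nat \<Rightarrow> nat) \<Rightarrow> nat \<Rightarrow> nat" where
  "max_split g d n = Max ((\<lambda>xs. sum_list (map g xs)) ` decomps (d n) n)"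

end

theory Submission
  imports Defs
begin

text \<open>For every \<open>\<epsilon> > 0\<close> one has \<open>g m \<le> (1 + \<epsilon>) m + C\<close> for all \<open>m\<close>, with a constant \<open>C\<close>
  absorbing the finitely many small arguments. Summing this over the \<open>d(n)\<close> parts of a
  decomposition gives \<open>f(n) \<le> (1 + \<epsilon>) n + C d(n)\<close>, and \<open>C d(n) = o(n)\<close>. Conversely the
  decomposition \<open>n = n + 0 + \<dots> + 0\<close> gives \<open>f(n) \<ge> g(n) = n + o(n)\<close>.\<close>

lemma finite_decomps: "finite (decomps k n)"
proof -
  have "decomps k n \<subseteq> {xs. set xs \<subseteq> {..n} \<and> length xs = k}"
    unfolding decomps_def using member_le_sum_list by fastforce
  then show ?thesis
    using finite_lists_length_eq[of "{..n}" k] finite_subset by blast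
qed

lemma head_replicate_zero_in_decomps:
  "k > 0 \<Longrightarrow> n # replicate (k - 1) 0 \<in> decomps k n"
  unfolding decomps_def by auto

lemma max_split_ge:
  assumes "d n > 0"
  shows "g n \<le> max_split g d n"
proof -
  have "sum_list (map g (n # replicate (d n - 1) 0)) \<le> max_split g d n"
    unfolding max_split_def
    by (intro Max_ge finite_imageI finite_decomps imageI head_replicate_zero_in_decomps assms)
  then show ?thesis by simp
qed

lemma sum_list_map_le_linear:
  fixes g :: "nat \<Rightarrow> nat"
  assumes "\<And>m. real (g m) \<le> a * real m + C"
  shows "real (sum_list (map g xs)) \<le> a * real (sum_list xs) + real (length xs) * C"
proof (induction xs)
  case (Cons x xs)
  with assms[of x] show ?case by (simp add: algebra_simps)
qed simp

lemma max_split_le_linear: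
  assumes "d n > 0" and "\<And>m. real (g m) \<le> a * real m + C"
  shows "real (max_split g d n) \<le> a * real n + real (d n) * C"
proof -
  have "max_split g d n \<in> (\<lambda>xs. sum_list (map g xs)) ` decomps (d n) n"
    unfolding max_split_def
    using finite_decomps head_replicate_zero_in_decomps[OF assms(1)] by (intro Max_in) auto
  then obtain xs where "xs \<in> decomps (d n) n" and "max_split g d n = sum_list (map g xs)"
    by blast
  with sum_list_map_le_linear[OF assms(2), of xs] show ?thesis
    unfolding decomps_def by simp
qed

lemma smallo_le_linear_plus_const:
  fixes f :: "nat \<Rightarrow> real"
  assumes "f \<in> o(\<lambda>n. real n)" and "e > 0"
  obtains C where "\<And>n. f n \<le> e * real n + C"
proof -
  from landau_o.smallD[OF assms] obtain N where N: "\<And>n. n \<ge> N \<Longrightarrow> \<bar>f n\<bar> \<le> e * real n"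
    by (auto simp: eventually_at_top_linorder)
  define C where "C = (\<Sum>m<N. \<bar>f m\<bar>)"
  have "C \<ge> 0" unfolding C_def by (intro sum_nonneg) auto
  have "f n \<le> e * real n + C" for n
  proof (cases "n < N")
    case True
    then have "\<bar>f n\<bar> \<le> C"
      unfolding C_def by (intro member_le_sum) auto
    moreover have "0 \<le> e * real n" using assms(2) by simp
    ultimately show ?thesis by linarith
  next
    case False
    with N[of n] \<open>C \<ge> 0\<close> show ?thesis by linarith
  qed
  then show ?thesis using that by blast
qed

theorem lemma5p5:
  fixes g d :: "nat \<Rightarrow> nat"
  assumes g_asym: "(\<lambda>n. real (g n) - real n) \<in> o(\<lambda>n. real n)"
    and d_asym: "(\<lambda>n. real (d n)) \<in> o(\<lambda>n. real n)"
    and d_pos: "\<And>n. n > 0 \<Longrightarrow> d n > 0"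
  shows "(\<lambda>n. real (max_split g d n) - real n) \<in> o(\<lambda>n. real n)"
proof (rule landau_o.smallI)
  fix c :: real assume c: "c > 0"
  then obtain C where g_le: "\<And>m. real (g m) \<le> (1 + c / 2) * real m + C"
    using smallo_le_linear_plus_const[OF g_asym, of "c / 2"] by (auto simp: algebra_simps)
  have "(\<lambda>n. real (d n) * C) \<in> o(\<lambda>n. real n)"
    using d_asym by simp
  from landau_o.smallD[OF this, of "c / 2"] c
  have "\<forall>\<^sub>F n in at_top. real (d n) * C \<le> c / 2 * real n"
    by (auto elim: eventually_mono)
  moreover from landau_o.smallD[OF g_asym c]
  have "\<forall>\<^sub>F n in at_top. \<bar>real (g n) - real n\<bar> \<le> c * real n" by simp
  moreover have "\<forall>\<^sub>F n in at_top. n > (0::nat)" by (rule eventually_gt_at_top)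
  ultimately show "\<forall>\<^sub>F n in at_top. norm (real (max_split g d n) - real n) \<le> c * norm (real n)"
  proof eventually_elim
    case (elim n)
    with d_pos have "d n > 0" by blast
    with max_split_ge[of d n g] max_split_le_linear[of d n g, OF _ g_le] elim(1,2)
    show ?case by (simp add: abs_le_iff algebra_simps)
  qed
qed

end
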